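(* Let $\{\mathcal{F}_n\}_{n\ge0}$ be a filtration of sub-$\sigma$-fields of $\mathcal{F}$, let $X\in L^\infty$, and let $\{X_n\}_{n\ge0}$ satisfy $X_n\in\mathbb{E}[X\mid\mathcal{F}_n]$ for all $n$. If $X$ lies in the $\|\cdot\|_\infty$-closure of $\bigcup_{n\ge1}L^\infty(\mathcal{F}_n)$, then $\lim_{n\to\infty}\|X_n-X\|_\infty=0$; in particular $X_n\to X$ almost surely.
   Context: $\mathbb{K}$ is a local field with non-archimedean absolute value $|\cdot|$ satisfying $|x|=0 \iff x=0$, $|xy|=|x||y|$, $|x+y|\le|x|\vee|y|$. $(\Omega,\mathcal{F},\mathbb{P})$ is a probability space; all (in)equalities are a.s. $L^\infty$ is the space of $\mathbb{K}$-valued random variables $X$ with $\|X\|_\infty:=\operatorname{ess\,sup}|X|<\infty$ (identified a.s.); $L^\infty(\mathcal{G})$ its $\mathcal{G}$-measurable subspace. For a non-negative real random variable $S$, $\operatorname{ess\,sup}\{S\mid\mathcal{G}\}:=\sup_{p\ge1}\mathbb{E}[S^p\mid\mathcal{G}]^{1/p}$ (usual real conditional expectation), $\|X\|_\mathcal{G}:=\operatorname{ess\,sup}\{|X|\mid\mathcal{G}\}$, and the conditional expectation is the set $\mathbb{E}[X\mid\mathcal{G}]:=\{Y\in L^\infty(\mathcal{G}): \|X-Y\|_\mathcal{G}\le\|X-Z\|_\mathcal{G}\text{ for all }Z\in L^\infty(\mathcal{G})\}$. A filtration is a non-decreasing sequence of sub-$\sigma$-fields. *)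

theory Defs
  imports "HOL-Probability.Probability"
begin

definition nonarch_local_field :: "('k::{field,metric_space} \<Rightarrow> real) \<Rightarrow> bool" where
  "nonarch_local_field av \<longleftrightarrow>
     (\<forall>x. av x \<ge> 0) \<and> (\<forall>x. av x = 0 \<longleftrightarrow> x = 0) \<and>
     (\<forall>x y. av (x * y) = av x * av y) \<and>
     (\<forall>x y. av (x + y) \<le> max (av x) (av y)) \<and>
     (\<forall>x y. dist x y = av (x - y)) \<and>
     (\<exists>x. av x \<noteq> 0 \<and> av x \<noteq> 1) \<and>
     (\<forall>f::nat \<Rightarrow> 'k. Cauchy f \<longrightarrow> convergent f) \<and> locally compact (UNIV :: 'k set)"

definition Linf_norm :: "'a measure \<Rightarrow> ('k \<Rightarrow> real) \<Rightarrow> ('a \<Rightarrow> 'k) \<Rightarrow> ereal" where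
  "Linf_norm M av X = esssup M (\<lambda>\<omega>. ereal (av (X \<omega>)))"

definition Linf :: "'a measure \<Rightarrow> 'a measure \<Rightarrow> ('k::topological_space \<Rightarrow> real) \<Rightarrow> ('a \<Rightarrow> 'k) set" where
  "Linf M G av = {X. X \<in> borel_measurable G \<and> Linf_norm M av X < \<infinity>}"

definition cond_esssup :: "'a measure \<Rightarrow> 'a measure \<Rightarrow> ('a \<Rightarrow> real) \<Rightarrow> 'a \<Rightarrow> ereal" where
  "cond_esssup M G S = (\<lambda>\<omega>. SUP p\<in>{1::nat..}. ereal (real_cond_exp M G (\<lambda>x. S x ^ p) \<omega> powr (1 / real p)))"

definition cond_norm :: "'a measure \<Rightarrow> 'a measure \<Rightarrow> ('k \<Rightarrow> real) \<Rightarrow> ('a \<Rightarrow> 'k) \<Rightarrow> 'a \<Rightarrow> ereal" where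
  "cond_norm M G av X = cond_esssup M G (\<lambda>\<omega>. av (X \<omega>))"

definition na_cond_exp :: "'a measure \<Rightarrow> 'a measure \<Rightarrow> ('k::{field,topological_space} \<Rightarrow> real)
    \<Rightarrow> ('a \<Rightarrow> 'k) \<Rightarrow> ('a \<Rightarrow> 'k) set" where
  "na_cond_exp M G av X = {Y \<in> Linf M G av. \<forall>Z \<in> Linf M G av.
      AE \<omega> in M. cond_norm M G av (\<lambda>x. X x - Y x) \<omega> \<le> cond_norm M G av (\<lambda>x. X x - Z x) \<omega>}"

end

theory Submission
  imports Defs
begin

text \<open>A best approximation of \<open>X\<close> in \<open>L\<^sup>\<infinity>(G)\<close> for the conditional norm
  \<open>\<parallel>\<cdot>\<parallel>\<^sub>G\<close> is also a best approximation for \<open>\<parallel>\<cdot>\<parallel>\<^sub>\<infinity>\<close>: a non-negative bounded \<open>S\<close>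
  satisfies \<open>S \<le> c\<close> a.s. iff \<open>ess sup{S | G} \<le> c\<close> a.s., because \<open>E[S\<^sup>p | G] \<le> c\<^sup>p\<close> for all
  \<open>p\<close> forces \<open>P(S \<ge> c + \<epsilon>) \<le> (c / (c + \<epsilon>))\<^sup>p \<rightarrow> 0\<close>. Hence \<open>\<parallel>X\<^sub>n - X\<parallel>\<^sub>\<infinity> \<le> \<parallel>X - Y\<parallel>\<^sub>\<infinity>\<close>
  for every \<open>Y \<in> L\<^sup>\<infinity>(F\<^sub>m)\<close> with \<open>m \<le> n\<close>, which the density hypothesis makes small.
  Separability of the local field makes \<open>\<omega> \<mapsto> |X \<omega> - Y \<omega>|\<close> measurable.\<close>

lemma nonarch_local_field_dist:
  assumes "nonarch_local_field av"
  shows "av (x - y) = dist x y"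
  using assms unfolding nonarch_local_field_def by simp

lemma nonarch_local_field_mult:
  assumes "nonarch_local_field av"
  shows "av (x * y) = av x * av y"
  using assms unfolding nonarch_local_field_def by simp

lemma nonarch_local_field_eq_0_iff:
  assumes "nonarch_local_field av"
  shows "av x = 0 \<longleftrightarrow> x = 0"
  using assms unfolding nonarch_local_field_def by simp

lemma nonarch_local_field_inverse:
  assumes "nonarch_local_field av"
  shows "av (inverse x) = inverse (av x)"
proof (cases "x = 0")
  case False
  then have "av x * av (inverse x) = av 1"
    using nonarch_local_field_mult[OF assms, of x "inverse x"] by simp
  moreover have "av 1 = 1"
    using nonarch_local_field_mult[OF assms, of 1 1] nonarch_local_field_eq_0_iff[OF assms, of 1]
    by simp
  ultimately show ?thesis
    by (metis nonarch_local_field_eq_0_iff[OF assms] inverse_unique)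
qed (use nonarch_local_field_eq_0_iff[OF assms, of 0] in simp)

lemma nonarch_local_field_power:
  assumes "nonarch_local_field av"
  shows "av (x ^ n) = av x ^ n"
proof (induction n)
  case 0
  show ?case
    using nonarch_local_field_mult[OF assms, of 1 1] nonarch_local_field_eq_0_iff[OF assms, of 1]
    by simp
qed (simp add: nonarch_local_field_mult[OF assms])

lemma nonarch_local_field_contracting_element:
  assumes "nonarch_local_field av"
  obtains p where "0 < av p" "av p < 1"
proof -
  obtain x where x: "av x \<noteq> 0" "av x \<noteq> 1" "0 \<le> av x"
    using assms unfolding nonarch_local_field_def by auto
  show ?thesis
  proof (cases "av x < 1")
    case True
    with x show ?thesis by (intro that[of x]) auto
  next
    case False
    with x show ?thesis
      by (intro that[of "inverse x"]) (auto simp: nonarch_local_field_inverse[OF assms] inverse_less_1_iff)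
  qed
qed

lemma compact_imp_countable_dense:
  fixes V :: "'a::metric_space set"
  assumes "compact V"
  obtains D where "countable D" "\<And>y e. y \<in> V \<Longrightarrow> 0 < e \<Longrightarrow> \<exists>d\<in>D. dist y d < e"
proof -
  have "\<forall>m::nat. \<exists>K. finite K \<and> V \<subseteq> (\<Union>x\<in>K. ball x (1 / Suc m))"
  proof
    fix m :: nat
    have "0 < 1 / real (Suc m)"
      by simp
    then show "\<exists>K. finite K \<and> V \<subseteq> (\<Union>x\<in>K. ball x (1 / Suc m))"
      using assms compact_eq_totally_bounded by blast
  qed
  then obtain K where K: "\<And>m. finite (K m)" "\<And>m. V \<subseteq> (\<Union>x\<in>K m. ball x (1 / Suc m))"
    by metis
  show ?thesis
  proof
    show "countable (\<Union>m. K m)"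
      using K(1) by (simp add: countable_finite)
  next
    fix y e assume "y \<in> V" "0 < (e::real)"
    then obtain m where m: "1 / Suc m < e"
      using nat_approx_posE by blast
    obtain x where "x \<in> K m" "y \<in> ball x (1 / Suc m)"
      using K(2) \<open>y \<in> V\<close> by blast
    with m show "\<exists>d\<in>\<Union>m. K m. dist y d < e"
      by (metis UN_I UNIV_I dist_commute mem_ball order.strict_trans)
  qed
qed

text \<open>A compact neighbourhood of 0 is separable, and multiplication by powers of an element
  of absolute value below 1 moves every point into it.\<close>
lemma nonarch_local_field_countable_dense:
  fixes av :: "'k::{field,metric_space} \<Rightarrow> real"
  assumes K: "nonarch_local_field av"
  obtains D :: "'k set" where "countable D" "\<And>y e. 0 < e \<Longrightarrow> \<exists>d\<in>D. dist y d < e"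
proof -
  have "locally compact (UNIV :: 'k set)"
    using K unfolding nonarch_local_field_def by auto
  then obtain U V where UV: "openin (top_of_set UNIV) U" "compact V" "(0::'k) \<in> U" "U \<subseteq> V"
    using locallyE[of compact UNIV UNIV 0] by auto
  then obtain r where r: "0 < r" "ball 0 r \<subseteq> V"
    using open_contains_ball[of U] by auto
  obtain D0 where D0: "countable D0" "\<And>y e. y \<in> V \<Longrightarrow> 0 < e \<Longrightarrow> \<exists>d\<in>D0. dist y d < e"
    using compact_imp_countable_dense[OF UV(2)] by blast
  obtain p where p: "0 < av p" "av p < 1"
    using nonarch_local_field_contracting_element[OF K] by blast
  have av_dist_0: "av x = dist x 0" for x
    using nonarch_local_field_dist[OF K, of x 0] by simp
  show ?thesis
  proof
    show "countable (\<Union>n. (\<lambda>d. d / p ^ n) ` D0)"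
      using D0(1) by simp
  next
    fix y :: 'k and e :: real assume "0 < e"
    have "(\<lambda>n. av p ^ n * av y) \<longlonglongrightarrow> 0"
      using p by (intro tendsto_mult_left_zero LIMSEQ_power_zero) simp
    then have "eventually (\<lambda>n. av p ^ n * av y < r) sequentially"
      using r(1) by (rule order_tendstoD(2))
    then obtain n where n: "av p ^ n * av y < r"
      using eventually_sequentially by auto
    then have "av (p ^ n * y) < r"
      by (simp add: nonarch_local_field_mult[OF K] nonarch_local_field_power[OF K])
    then have "dist 0 (p ^ n * y) < r"
      by (simp add: av_dist_0 dist_commute)
    then have "p ^ n * y \<in> V"
      using r(2) by auto
    moreover have "0 < e * av p ^ n"
      using \<open>0 < e\<close> p by simp
    ultimately obtain d where d: "d \<in> D0" "dist (p ^ n * y) d < e * av p ^ n"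
      using D0(2) by blast
    have "p ^ n \<noteq> 0"
      using p(1) nonarch_local_field_eq_0_iff[OF K, of p] by auto
    then have "y - d / p ^ n = (p ^ n * y - d) * inverse (p ^ n)"
      by (simp add: field_simps)
    then have "dist y (d / p ^ n) = dist (p ^ n * y) d / av p ^ n"
      by (simp add: nonarch_local_field_dist[OF K, symmetric] nonarch_local_field_mult[OF K]
          nonarch_local_field_inverse[OF K] nonarch_local_field_power[OF K] divide_inverse)
    also have "\<dots> < e"
      using d(2) p by (simp add: divide_less_eq)
    finally show "\<exists>d\<in>\<Union>n. (\<lambda>d. d / p ^ n) ` D0. dist y d < e"
      using d(1) by blast
  qed
qed

lemma borel_measurable_dist_countable_dense:
  fixes f g :: "'a \<Rightarrow> 'b::metric_space"
  assumes D: "countable (D :: 'b set)" "\<And>y e. 0 < e \<Longrightarrow> \<exists>d\<in>D. dist y d < e"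
    and [measurable]: "f \<in> borel_measurable M" "g \<in> borel_measurable M"
  shows "(\<lambda>\<omega>. dist (f \<omega>) (g \<omega>)) \<in> borel_measurable M"
proof -
  have "D \<noteq> {}"
    using D(2)[of 1] by auto
  have dist_eq_INF: "dist x z = (INF d\<in>D. dist x d + dist d z)" for x z :: 'b
  proof (rule antisym)
    show "dist x z \<le> (INF d\<in>D. dist x d + dist d z)"
      using \<open>D \<noteq> {}\<close> by (intro cINF_greatest dist_triangle)
    show "(INF d\<in>D. dist x d + dist d z) \<le> dist x z"
    proof (rule field_le_epsilon)
      fix e :: real assume "0 < e"
      then obtain d where d: "d \<in> D" "dist x d < e / 2"
        using D(2) half_gt_zero by blast
      have "(INF d\<in>D. dist x d + dist d z) \<le> dist x d + dist d z"
        using d(1) by (intro cINF_lower bdd_belowI[of _ 0]) auto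
      also have "\<dots> \<le> dist x z + e"
        using d(2) dist_triangle[of d z x] by (simp add: dist_commute)
      finally show "(INF d\<in>D. dist x d + dist d z) \<le> dist x z + e" .
    qed
  qed
  have [measurable]: "(\<lambda>x. dist x d) \<in> borel_measurable borel" for d :: 'b
    by (intro borel_measurable_continuous_onI continuous_intros)
  have "(\<lambda>\<omega>. INF d\<in>D. dist (f \<omega>) d + dist d (g \<omega>)) \<in> borel_measurable M"
    by (intro borel_measurable_cINF_real[OF D(1)]) (simp add: dist_commute[of _ "g _"])
  then show ?thesis
    by (simp only: dist_eq_INF[symmetric])
qed

lemma powr_inverse_le_iff:
  fixes x c :: real
  assumes "0 \<le> x" "0 \<le> c" "0 < p"
  shows "x powr (1 / real p) \<le> c \<longleftrightarrow> x \<le> c ^ p"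
proof -
  have "x powr (1 / real p) = root p x"
    using assms by (simp add: root_powr_inverse)
  moreover have "c = root p (c ^ p)"
    using assms by (simp add: real_root_power_cancel)
  ultimately show ?thesis
    using assms(3) by (metis real_root_le_iff)
qed

lemma integrable_power_AE_bounded:
  fixes U :: "'a \<Rightarrow> real"
  assumes "finite_measure M" "U \<in> borel_measurable M" "\<And>\<omega>. 0 \<le> U \<omega>" "AE \<omega> in M. U \<omega> \<le> b"
  shows "integrable M (\<lambda>\<omega>. U \<omega> ^ p)"
proof (rule finite_measure.integrable_const_bound[OF assms(1), where B = "b ^ p"])
  show "AE \<omega> in M. norm (U \<omega> ^ p) \<le> b ^ p"
    using assms(4) by eventually_elim (use assms(3) in \<open>auto intro: power_mono\<close>)
qed (use assms(2) in measurable)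

lemma cond_esssup_le_const:
  fixes T :: "'a \<Rightarrow> real"
  assumes "finite_measure M" "subalgebra M G"
    and "T \<in> borel_measurable M" "\<And>\<omega>. 0 \<le> T \<omega>" "AE \<omega> in M. T \<omega> \<le> c" "0 \<le> c"
  shows "AE \<omega> in M. cond_esssup M G T \<omega> \<le> ereal c"
proof -
  interpret finite_measure M by (rule assms(1))
  interpret finite_measure_subalgebra M G by unfold_locales (rule assms(2))
  have "AE \<omega> in M. 0 \<le> real_cond_exp M G (\<lambda>x. T x ^ p) \<omega> \<and> real_cond_exp M G (\<lambda>x. T x ^ p) \<omega> \<le> c ^ p"
    for p
  proof -
    have int: "integrable M (\<lambda>x. T x ^ p)"
      using assms(1,3-5) by (rule integrable_power_AE_bounded)
    have "AE \<omega> in M. 0 \<le> real_cond_exp M G (\<lambda>x. T x ^ p) \<omega>"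
      using assms(4) by (intro real_cond_exp_ge_c[OF int]) simp
    moreover have "AE \<omega> in M. real_cond_exp M G (\<lambda>x. T x ^ p) \<omega> \<le> c ^ p"
      using assms(5) by (intro real_cond_exp_le_c[OF int]) (auto intro: power_mono assms(4))
    ultimately show ?thesis
      by eventually_elim simp
  qed
  then have "AE \<omega> in M. \<forall>p. 0 \<le> real_cond_exp M G (\<lambda>x. T x ^ p) \<omega> \<and> real_cond_exp M G (\<lambda>x. T x ^ p) \<omega> \<le> c ^ p"
    by (simp add: AE_all_countable)
  then show ?thesis
    by eventually_elim
      (use assms(6) in \<open>auto simp: cond_esssup_def powr_inverse_le_iff intro!: SUP_least\<close>)
qed

lemma (in prob_space) AE_le_of_moments_le:
  fixes S :: "'a \<Rightarrow> real"
  assumes "S \<in> borel_measurable M" "\<And>\<omega>. 0 \<le> S \<omega>" "0 \<le> c"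
    and int: "\<And>p. 1 \<le> p \<Longrightarrow> integrable M (\<lambda>\<omega>. S \<omega> ^ p)"
    and moment: "\<And>p. 1 \<le> p \<Longrightarrow> (\<integral>\<omega>. S \<omega> ^ p \<partial>M) \<le> c ^ p"
  shows "AE \<omega> in M. S \<omega> \<le> c"
proof -
  have "AE \<omega> in M. S \<omega> < c + e" if "0 < e" for e
  proof -
    define A where "A = {\<omega> \<in> space M. c + e \<le> S \<omega>}"
    have "measure M A \<le> (c / (c + e)) ^ p" if "1 \<le> p" for p
    proof -
      have "A = {\<omega> \<in> space M. (c + e) ^ p \<le> S \<omega> ^ p}"
        unfolding A_def using assms(2,3) \<open>0 < e\<close> \<open>1 \<le> p\<close> by (auto simp: power_mono_iff)
      then have "measure M A \<le> (\<integral>\<omega>. S \<omega> ^ p \<partial>M) / (c + e) ^ p"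
        using assms(2,3) \<open>0 < e\<close> by (auto intro!: integral_Markov_inequality_measure int \<open>1 \<le> p\<close>)
      also have "\<dots> \<le> c ^ p / (c + e) ^ p"
        using assms(3) \<open>0 < e\<close> by (intro divide_right_mono moment \<open>1 \<le> p\<close>) simp
      finally show ?thesis
        by (simp add: power_divide)
    qed
    moreover have "(\<lambda>p. (c / (c + e)) ^ p) \<longlonglongrightarrow> 0"
      using assms(3) \<open>0 < e\<close> by (intro LIMSEQ_power_zero) auto
    ultimately have "measure M A \<le> 0"
      by (intro LIMSEQ_le_const[where X = "\<lambda>p. (c / (c + e)) ^ p"]) auto
    then have "emeasure M A = 0"
      by (simp add: emeasure_eq_measure measure_le_0_iff)
    moreover have "A \<in> sets M"
      unfolding A_def using assms(1) by measurable
    ultimately show ?thesis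
      by (subst AE_iff_measurable[of A]) (auto simp: A_def not_less)
  qed
  then have "AE \<omega> in M. \<forall>k::nat. S \<omega> < c + 1 / Suc k"
    by (simp add: AE_all_countable)
  then show ?thesis
  proof eventually_elim
    case (elim \<omega>)
    show ?case
    proof (rule field_le_epsilon)
      fix e :: real assume "0 < e"
      then obtain k where "1 / Suc k < e"
        using nat_approx_posE by blast
      then show "S \<omega> \<le> c + e"
        using elim[rule_format, of k] by linarith
    qed
  qed
qed

lemma AE_le_const_of_cond_esssup_le:
  fixes S :: "'a \<Rightarrow> real"
  assumes "prob_space M" "subalgebra M G"
    and "S \<in> borel_measurable M" "\<And>\<omega>. 0 \<le> S \<omega>" "AE \<omega> in M. S \<omega> \<le> b" "0 \<le> c"
    and le: "AE \<omega> in M. cond_esssup M G S \<omega> \<le> ereal c"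
  shows "AE \<omega> in M. S \<omega> \<le> c"
proof -
  interpret prob_space M by (rule assms(1))
  interpret finite_measure_subalgebra M G by unfold_locales (rule assms(2))
  have int: "integrable M (\<lambda>x. S x ^ p)" for p
    using finite_measure_axioms assms(3-5) by (rule integrable_power_AE_bounded)
  have "(\<integral>\<omega>. S \<omega> ^ p \<partial>M) \<le> c ^ p" if "1 \<le> p" for p
  proof -
    have "AE \<omega> in M. 0 \<le> real_cond_exp M G (\<lambda>x. S x ^ p) \<omega>"
      using assms(4) by (intro real_cond_exp_ge_c[OF int]) simp
    with le have "AE \<omega> in M. real_cond_exp M G (\<lambda>x. S x ^ p) \<omega> \<le> c ^ p"
    proof eventually_elim
      case (elim \<omega>)
      have "ereal (real_cond_exp M G (\<lambda>x. S x ^ p) \<omega> powr (1 / real p)) \<le> cond_esssup M G S \<omega>"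
        unfolding cond_esssup_def using \<open>1 \<le> p\<close> by (intro SUP_upper) auto
      also note elim(1)
      finally have "real_cond_exp M G (\<lambda>x. S x ^ p) \<omega> powr (1 / real p) \<le> c"
        by simp
      with elim(2) show ?case
        using assms(6) \<open>1 \<le> p\<close> by (simp add: powr_inverse_le_iff)
    qed
    then have "(\<integral>\<omega>. real_cond_exp M G (\<lambda>x. S x ^ p) \<omega> \<partial>M) \<le> (\<integral>\<omega>. c ^ p \<partial>M)"
      by (intro integral_mono_AE real_cond_exp_int(1)[OF int]) simp
    then show ?thesis
      by (simp add: real_cond_exp_int(2)[OF int] prob_space)
  qed
  then show ?thesis
    using assms(3,4,6) int by (intro AE_le_of_moments_le)
qed

lemma nonarch_local_field_borel_measurable_dist:
  fixes f g :: "'a \<Rightarrow> 'k::{field,metric_space}"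
  assumes "nonarch_local_field (av :: 'k \<Rightarrow> real)"
    and "f \<in> borel_measurable M" "g \<in> borel_measurable M"
  shows "(\<lambda>\<omega>. dist (f \<omega>) (g \<omega>)) \<in> borel_measurable M"
proof -
  obtain D :: "'k set" where "countable D" "\<And>y e. 0 < e \<Longrightarrow> \<exists>d\<in>D. dist y d < e"
    using nonarch_local_field_countable_dense[OF assms(1)] by blast
  then show ?thesis
    using assms(2,3) by (rule borel_measurable_dist_countable_dense)
qed

lemma Linf_norm_diff_eq_esssup_dist:
  assumes "nonarch_local_field av"
  shows "Linf_norm M av (\<lambda>\<omega>. X \<omega> - Y \<omega>) = esssup M (\<lambda>\<omega>. ereal (dist (X \<omega>) (Y \<omega>)))"
  by (simp add: Linf_norm_def nonarch_local_field_dist[OF assms])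

lemma Linf_norm_nonneg:
  assumes "emeasure M (space M) \<noteq> 0" "\<And>x. 0 \<le> av x"
  shows "0 \<le> Linf_norm M av Y"
proof -
  have "esssup M (\<lambda>\<omega>. 0) \<le> Linf_norm M av Y"
    unfolding Linf_norm_def using assms(2) by (intro esssup_mono) auto
  then show ?thesis
    using assms(1) by (simp add: esssup_const)
qed

lemma Linf_AE_bounded:
  assumes "Y \<in> Linf M G av"
  obtains b where "AE \<omega> in M. av (Y \<omega>) \<le> b"
proof -
  have norm_finite: "Linf_norm M av Y < \<infinity>"
    using assms unfolding Linf_def by simp
  have "AE \<omega> in M. ereal (av (Y \<omega>)) \<le> Linf_norm M av Y"
    unfolding Linf_norm_def by (rule esssup_AE)
  then have "AE \<omega> in M. av (Y \<omega>) \<le> real_of_ereal (Linf_norm M av Y)"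
    by eventually_elim (use norm_finite in \<open>auto simp: real_of_ereal_ord_simps\<close>)
  then show ?thesis
    by (rule that)
qed

lemma Linf_subalgebra:
  assumes "subalgebra G H"
  shows "Linf M H av \<subseteq> Linf M G av"
  using measurable_from_subalg[OF assms] unfolding Linf_def by blast

lemma Linf_dist_AE_bounded:
  assumes "nonarch_local_field av" "X \<in> Linf M G av" "Y \<in> Linf M H av"
  obtains b where "AE \<omega> in M. dist (X \<omega>) (Y \<omega>) \<le> b"
proof -
  obtain a b where "AE \<omega> in M. av (X \<omega>) \<le> a" "AE \<omega> in M. av (Y \<omega>) \<le> b"
    using Linf_AE_bounded[OF assms(2)] Linf_AE_bounded[OF assms(3)] by metis
  then have "AE \<omega> in M. dist (X \<omega>) (Y \<omega>) \<le> a + b"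
  proof eventually_elim
    case (elim \<omega>)
    have "dist (X \<omega>) (Y \<omega>) \<le> dist (X \<omega>) 0 + dist 0 (Y \<omega>)"
      by (rule dist_triangle)
    also have "\<dots> = av (X \<omega>) + av (Y \<omega>)"
      using nonarch_local_field_dist[OF assms(1), of "X \<omega>" 0]
        nonarch_local_field_dist[OF assms(1), of "Y \<omega>" 0]
      by (simp add: dist_commute)
    finally show ?case
      using elim by linarith
  qed
  then show ?thesis
    by (rule that)
qed

lemma na_cond_exp_Linf_norm_le:
  fixes X Y Z :: "'a \<Rightarrow> 'k::{field,metric_space}"
  assumes K: "nonarch_local_field av" and "prob_space M" and G: "subalgebra M G"
    and X: "X \<in> Linf M M av" and Y: "Y \<in> na_cond_exp M G av X" and Z: "Z \<in> Linf M G av"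
  shows "Linf_norm M av (\<lambda>\<omega>. Y \<omega> - X \<omega>) \<le> Linf_norm M av (\<lambda>\<omega>. X \<omega> - Z \<omega>)"
proof (cases "Linf_norm M av (\<lambda>\<omega>. X \<omega> - Z \<omega>) = \<infinity>")
  case False
  interpret prob_space M by fact
  have YL: "Y \<in> Linf M G av"
    using Y unfolding na_cond_exp_def by simp
  have [measurable]: "X \<in> borel_measurable M" "Y \<in> borel_measurable M" "Z \<in> borel_measurable M"
    using X YL Z Linf_subalgebra[OF G] unfolding Linf_def by auto
  define S where "S \<omega> = dist (X \<omega>) (Y \<omega>)" for \<omega>
  define T where "T \<omega> = dist (X \<omega>) (Z \<omega>)" for \<omega>
  have [measurable]: "S \<in> borel_measurable M" "T \<in> borel_measurable M"
    unfolding S_def T_def by (auto intro: nonarch_local_field_borel_measurable_dist[OF K])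
  define c where "c = real_of_ereal (Linf_norm M av (\<lambda>\<omega>. X \<omega> - Z \<omega>))"
  have "0 \<le> Linf_norm M av (\<lambda>\<omega>. X \<omega> - Z \<omega>)"
    using K unfolding nonarch_local_field_def by (intro Linf_norm_nonneg) (auto simp: emeasure_space_1)
  with False have norm_XZ: "Linf_norm M av (\<lambda>\<omega>. X \<omega> - Z \<omega>) = ereal c" and "0 \<le> c"
    unfolding c_def by (cases "Linf_norm M av (\<lambda>\<omega>. X \<omega> - Z \<omega>)"; simp)+
  have "AE \<omega> in M. ereal (T \<omega>) \<le> ereal c"
    using esssup_AE[of "\<lambda>\<omega>. ereal (T \<omega>)" M]
    by (simp add: T_def norm_XZ[unfolded Linf_norm_diff_eq_esssup_dist[OF K]])
  then have "AE \<omega> in M. cond_esssup M G T \<omega> \<le> ereal c"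
    using finite_measure_axioms G \<open>0 \<le> c\<close> by (intro cond_esssup_le_const) (auto simp: T_def)
  moreover have "AE \<omega> in M. cond_esssup M G S \<omega> \<le> cond_esssup M G T \<omega>"
    using Y Z unfolding na_cond_exp_def cond_norm_def S_def T_def nonarch_local_field_dist[OF K]
    by auto
  ultimately have "AE \<omega> in M. cond_esssup M G S \<omega> \<le> ereal c"
    by eventually_elim (rule order_trans)
  moreover obtain b where "AE \<omega> in M. S \<omega> \<le> b"
    using Linf_dist_AE_bounded[OF K X YL] unfolding S_def by blast
  ultimately have "AE \<omega> in M. S \<omega> \<le> c"
    by (intro AE_le_const_of_cond_esssup_le[OF prob_space_axioms G \<open>S \<in> borel_measurable M\<close> _ _ \<open>0 \<le> c\<close>])
      (simp_all add: S_def)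
  then have "esssup M (\<lambda>\<omega>. ereal (S \<omega>)) \<le> ereal c"
    by (intro esssup_I) auto
  with norm_XZ show ?thesis
    by (simp add: Linf_norm_diff_eq_esssup_dist[OF K] S_def dist_commute)
qed simp

lemma LIMSEQ_ereal_0I:
  fixes f :: "nat \<Rightarrow> ereal"
  assumes "\<And>n. 0 \<le> f n" "\<And>e. 0 < e \<Longrightarrow> eventually (\<lambda>n. f n < ereal e) sequentially"
  shows "f \<longlonglongrightarrow> 0"
proof (rule order_tendstoI)
  fix a :: ereal assume "a < 0"
  then show "eventually (\<lambda>n. a < f n) sequentially"
    by (intro always_eventually allI less_le_trans[OF _ assms(1)])
next
  fix a :: ereal assume "0 < a"
  then obtain e where "0 < ereal e" "ereal e < a"
    using ereal_dense2 by blast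
  then show "eventually (\<lambda>n. f n < a) sequentially"
    using assms(2)[of e] by (auto elim: eventually_mono)
qed

lemma AE_LIMSEQ_of_esssup_dist_LIMSEQ_0:
  fixes U :: "nat \<Rightarrow> 'a \<Rightarrow> 'b::metric_space"
  assumes "(\<lambda>n. esssup M (\<lambda>\<omega>. ereal (dist (U n \<omega>) (V \<omega>)))) \<longlonglongrightarrow> 0"
  shows "AE \<omega> in M. (\<lambda>n. U n \<omega>) \<longlonglongrightarrow> V \<omega>"
proof -
  have "AE \<omega> in M. \<forall>n. ereal (dist (U n \<omega>) (V \<omega>)) \<le> esssup M (\<lambda>\<omega>. ereal (dist (U n \<omega>) (V \<omega>)))"
    by (simp add: AE_all_countable esssup_AE)
  then show ?thesis
  proof eventually_elim
    case (elim \<omega>)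
    have "(\<lambda>n. ereal (dist (U n \<omega>) (V \<omega>))) \<longlonglongrightarrow> 0"
      by (rule tendsto_sandwich[OF _ _ tendsto_const assms]) (use elim in auto)
    then have "(\<lambda>n. dist (U n \<omega>) (V \<omega>)) \<longlonglongrightarrow> 0"
      by (simp only: zero_ereal_def lim_ereal)
    then show ?case
      by (rule iffD2[OF tendsto_dist_iff])
  qed
qed

theorem mainTheorem19:
  fixes M :: "'a measure" and F :: "nat \<Rightarrow> 'a measure"
    and av :: "'k::{field,metric_space} \<Rightarrow> real"
    and X :: "'a \<Rightarrow> 'k" and Xs :: "nat \<Rightarrow> 'a \<Rightarrow> 'k"
  assumes "nonarch_local_field av"
    and "prob_space M"
    and "\<And>n. subalgebra M (F n)"
    and "\<And>n. sets (F n) \<subseteq> sets (F (Suc n))"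
    and "X \<in> Linf M M av"
    and "\<And>n. Xs n \<in> na_cond_exp M (F n) av X"
    and "\<forall>e>0. \<exists>n\<ge>1. \<exists>Y \<in> Linf M (F n) av. Linf_norm M av (\<lambda>\<omega>. X \<omega> - Y \<omega>) < ereal e"
  shows "(\<lambda>n. Linf_norm M av (\<lambda>\<omega>. Xs n \<omega> - X \<omega>)) \<longlonglongrightarrow> 0
         \<and> (AE \<omega> in M. (\<lambda>n. Xs n \<omega>) \<longlonglongrightarrow> X \<omega>)"
proof -
  note K = assms(1) and F = assms(3,4)
  have "eventually (\<lambda>n. Linf_norm M av (\<lambda>\<omega>. Xs n \<omega> - X \<omega>) < ereal e) sequentially"
    if "0 < e" for e
  proof -
    obtain N Y where Y: "Y \<in> Linf M (F N) av" "Linf_norm M av (\<lambda>\<omega>. X \<omega> - Y \<omega>) < ereal e"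
      using assms(7) \<open>0 < e\<close> by blast
    have "Linf_norm M av (\<lambda>\<omega>. Xs n \<omega> - X \<omega>) < ereal e" if "N \<le> n" for n
    proof -
      have "subalgebra (F n) (F N)"
        using F lift_Suc_mono_le[of "\<lambda>n. sets (F n)", OF _ that] by (simp add: subalgebra_def)
      then have "Y \<in> Linf M (F n) av"
        using Y(1) Linf_subalgebra by blast
      with Y(2) show ?thesis
        using na_cond_exp_Linf_norm_le[OF K assms(2,3,5,6)] by (blast intro: le_less_trans)
    qed
    then show ?thesis
      unfolding eventually_sequentially by blast
  qed
  moreover have "0 \<le> Linf_norm M av (\<lambda>\<omega>. Xs n \<omega> - X \<omega>)" for n
    using K assms(2) unfolding nonarch_local_field_def
    by (intro Linf_norm_nonneg) (auto simp: prob_space.emeasure_space_1)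
  ultimately have "(\<lambda>n. Linf_norm M av (\<lambda>\<omega>. Xs n \<omega> - X \<omega>)) \<longlonglongrightarrow> 0"
    by (intro LIMSEQ_ereal_0I)
  then show ?thesis
    using AE_LIMSEQ_of_esssup_dist_LIMSEQ_0 by (simp add: Linf_norm_diff_eq_esssup_dist[OF K])
qed

end
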